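(* There is a function $\delta(n)\to0$ such that for every directed graph $G=(V,E)$ with $n$ nodes and every initial state, the convergence time of the \textsc{Random Pick} process is at most $4D\Delta_+\log_2 n$ with probability at least $1-\delta(n)$; and if $G$ is undirected, the convergence time is at most $20n\log_2 n$ with probability at least $1-\delta(n)$.
   Context: $G=(V,E)$ directed, $n=|V|$, $\Gamma_+(v)=\{u:(v,u)\in E\}$, $d_+(v)=|\Gamma_+(v)|$, $\Delta_+=\max_v d_+(v)$. $d(v,u)$ is the length of a shortest directed path from $v$ to $u$ ($\infty$ if none), and $D=\max\{d(v,u): d(v,u)\ne\infty\}$. $G$ is undirected if $(v,u)\in E\iff(u,v)\in E$. A state is a map $V\to\{b,r,u\}$ (blue, red, uncolored); colored means blue or red. \textsc{Random Pick} process: in each round $t=1,2,\dots$, every node $v$ with $d_+(v)\ge1$ picks an out-neighbor $ps_t(v)$ uniformly at random, independently; $\mathcal{S}_t(v)=\mathcal{S}_{t-1}(ps_t(v))$ if $\mathcal{S}_{t-1}(v)=u$ and $\mathcal{S}_{t-1}(ps_t(v))\ne u$, else $\mathcal{S}_t(v)=\mathcal{S}_{t-1}(v)$. A state is stable if no uncolored node has a colored out-neighbor. The convergence time is the smallest $t\ge0$ such that $\mathcal{S}_t$ is stable. *)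

theory Defs
  imports "HOL-Probability.Probability"
begin

datatype color = Blue | Red | Uncolored

type_synonym 'a state = "'a \<Rightarrow> color"

definition out_nbrs :: "('a \<times> 'a) set \<Rightarrow> 'a \<Rightarrow> 'a set" where
  "out_nbrs E v = {u. (v, u) \<in> E}"

definition out_deg :: "('a \<times> 'a) set \<Rightarrow> 'a \<Rightarrow> nat" where
  "out_deg E v = card (out_nbrs E v)"

definition max_out_deg :: "'a set \<Rightarrow> ('a \<times> 'a) set \<Rightarrow> nat" where
  "max_out_deg V E = Max (out_deg E ` V)"

definition is_dist :: "('a \<times> 'a) set \<Rightarrow> 'a \<Rightarrow> 'a \<Rightarrow> nat \<Rightarrow> bool" where
  "is_dist E v u k \<longleftrightarrow> (v, u) \<in> E ^^ k \<and> (\<forall>j<k. (v, u) \<notin> E ^^ j)"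

definition diam :: "'a set \<Rightarrow> ('a \<times> 'a) set \<Rightarrow> nat" where
  "diam V E = Max {k. \<exists>v\<in>V. \<exists>u\<in>V. is_dist E v u k}"

definition undirected :: "('a \<times> 'a) set \<Rightarrow> bool" where
  "undirected E \<longleftrightarrow> (\<forall>v u. (v, u) \<in> E \<longleftrightarrow> (u, v) \<in> E)"

definition stable :: "'a set \<Rightarrow> ('a \<times> 'a) set \<Rightarrow> 'a state \<Rightarrow> bool" where
  "stable V E S \<longleftrightarrow> (\<forall>v\<in>V. S v = Uncolored \<longrightarrow> (\<forall>u\<in>out_nbrs E v. S u = Uncolored))"

text \<open>Deterministic evolution of Random Pick given the picks:
  ps (t, v) is the out-neighbour picked by v in round t (only used if d_+(v) >= 1).\<close>
fun rp_run :: "'a set \<Rightarrow> ('a \<times> 'a) set \<Rightarrow> 'a state \<Rightarrow> (nat \<times> 'a \<Rightarrow> 'a) \<Rightarrow> nat \<Rightarrow> 'a state" where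
  "rp_run V E S0 ps 0 = S0"
| "rp_run V E S0 ps (Suc t) =
     (let S = rp_run V E S0 ps t in
      (\<lambda>v. if v \<in> V \<and> out_nbrs E v \<noteq> {} \<and> S v = Uncolored \<and> S (ps (Suc t, v)) \<noteq> Uncolored
           then S (ps (Suc t, v)) else S v))"

definition picks_pmf :: "'a set \<Rightarrow> ('a \<times> 'a) set \<Rightarrow> nat \<Rightarrow> (nat \<times> 'a \<Rightarrow> 'a) pmf" where
  "picks_pmf V E T =
     Pi_pmf ({1..T} \<times> {v\<in>V. out_nbrs E v \<noteq> {}}) undefined
            (\<lambda>(t, v). pmf_of_set (out_nbrs E v))"

text \<open>Probability that the convergence time (least t with S_t stable) is at most x.
  This event only depends on the picks in rounds 1..floor x.\<close>
definition conv_prob :: "'a set \<Rightarrow> ('a \<times> 'a) set \<Rightarrow> 'a state \<Rightarrow> real \<Rightarrow> real" where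
  "conv_prob V E S0 x =
     measure_pmf.prob (picks_pmf V E (nat \<lfloor>x\<rfloor>))
       {ps. \<exists>t. real t \<le> x \<and> stable V E (rp_run V E S0 ps t)}"

end

theory Submission
  imports Defs
begin

(* The state is stable as soon as every node that can reach an initially coloured node is
   coloured. Fix such a node v and a shortest path v = p_0, ..., p_k = w to an initially
   coloured node w. Consider only the following pessimistic way for v to become coloured: the
   coloured suffix p_j, ..., p_k grows by p_(j-1) in a round in which p_(j-1) picks p_j, which
   happens with probability 1/d_+(p_(j-1)). With weights w_i = 1/(1 - alpha d_+(p_i)), the
   potential prod_(i<j) w_i of the front j contracts in expectation by the factor 1 - alpha per
   round, so after T rounds v is uncoloured with probability at most
   (1 - alpha)^T prod_(i<k) w_i <= exp(2 alpha sum_(i<k) d_+(p_i) - alpha T).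
   For alpha = 1/(2 Delta_+) the sum is at most D Delta_+; in an undirected graph every node
   is adjacent to at most three nodes of a shortest path, so the sum is at most 3n and
   alpha = 1/(2n) works. In both cases the bound is (e/n)^2, and a union bound over the
   n nodes leaves failure probability e^2/n. *)

lemma out_nbrs_subset: "E \<subseteq> V \<times> V \<Longrightarrow> out_nbrs E v \<subseteq> V"
  by (auto simp: out_nbrs_def)

lemma finite_out_nbrs: "finite V \<Longrightarrow> E \<subseteq> V \<times> V \<Longrightarrow> finite (out_nbrs E v)"
  by (rule finite_subset[OF out_nbrs_subset])

lemma out_deg_ge_1: "finite V \<Longrightarrow> E \<subseteq> V \<times> V \<Longrightarrow> (u, u') \<in> E \<Longrightarrow> 1 \<le> out_deg E u"
  unfolding out_deg_def using finite_out_nbrs card_gt_0_iff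
  by (metis One_nat_def Suc_leI empty_iff mem_Collect_eq out_nbrs_def)

lemma out_deg_le_max_out_deg: "finite V \<Longrightarrow> u \<in> V \<Longrightarrow> out_deg E u \<le> max_out_deg V E"
  unfolding max_out_deg_def by simp

lemma out_deg_le_card: "finite V \<Longrightarrow> E \<subseteq> V \<times> V \<Longrightarrow> out_deg E u \<le> card V"
  unfolding out_deg_def by (rule card_mono[OF _ out_nbrs_subset])

lemma rp_run_Suc_eq:
  "rp_run V E S0 ps (Suc t) v =
    (if v \<in> V \<and> out_nbrs E v \<noteq> {} \<and> rp_run V E S0 ps t v = Uncolored
        \<and> rp_run V E S0 ps t (ps (Suc t, v)) \<noteq> Uncolored
     then rp_run V E S0 ps t (ps (Suc t, v)) else rp_run V E S0 ps t v)"
  by (simp add: Let_def)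

lemma rp_run_colored_Suc:
  "rp_run V E S0 ps t v \<noteq> Uncolored \<Longrightarrow> rp_run V E S0 ps (Suc t) v \<noteq> Uncolored"
  by (auto simp: Let_def)

lemma picks_in_out_nbrs:
  assumes fin: "finite V" and EV: "E \<subseteq> V \<times> V" and ps: "ps \<in> set_pmf (picks_pmf V E T)"
    and t: "1 \<le> t" "t \<le> T" and v: "v \<in> V" "out_nbrs E v \<noteq> {}"
  shows "ps (t, v) \<in> out_nbrs E v"
proof -
  have "finite ({1..T} \<times> {v\<in>V. out_nbrs E v \<noteq> {}})" using fin by simp
  then have "ps (t, v) \<in> set_pmf (pmf_of_set (out_nbrs E v))"
    using ps t v unfolding picks_pmf_def by (auto simp: set_Pi_pmf PiE_dflt_def)
  then show ?thesis using v finite_out_nbrs[OF fin EV] by simp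
qed

definition reaches_colored :: "'a set \<Rightarrow> ('a \<times> 'a) set \<Rightarrow> 'a state \<Rightarrow> 'a \<Rightarrow> bool" where
  "reaches_colored V E S0 v \<longleftrightarrow> (\<exists>w\<in>V. S0 w \<noteq> Uncolored \<and> (v, w) \<in> E\<^sup>*)"

lemma reaches_colored_backward:
  "reaches_colored V E S0 u \<Longrightarrow> (v, u) \<in> E \<Longrightarrow> reaches_colored V E S0 v"
  unfolding reaches_colored_def by (meson converse_rtrancl_into_rtrancl)

lemma colored_imp_reaches_colored:
  assumes fin: "finite V" and EV: "E \<subseteq> V \<times> V" and ps: "ps \<in> set_pmf (picks_pmf V E T)"
  shows "t \<le> T \<Longrightarrow> v \<in> V \<Longrightarrow> rp_run V E S0 ps t v \<noteq> Uncolored \<Longrightarrow> reaches_colored V E S0 v"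
proof (induction t arbitrary: v)
  case 0
  then show ?case by (auto simp: reaches_colored_def)
next
  case (Suc t)
  show ?case
  proof (cases "out_nbrs E v \<noteq> {} \<and> rp_run V E S0 ps t v = Uncolored
         \<and> rp_run V E S0 ps t (ps (Suc t, v)) \<noteq> Uncolored")
    case True
    then have "ps (Suc t, v) \<in> out_nbrs E v"
      using picks_in_out_nbrs[OF fin EV ps, of "Suc t" v] Suc.prems by auto
    moreover from this have "reaches_colored V E S0 (ps (Suc t, v))"
      using Suc True EV by (auto simp: out_nbrs_def)
    ultimately show ?thesis by (auto simp: out_nbrs_def intro: reaches_colored_backward)
  next
    case False
    then have "rp_run V E S0 ps t v \<noteq> Uncolored" using Suc.prems by (auto simp: Let_def)
    then show ?thesis using Suc by simp
  qed
qed

lemma stable_if_reaching_colored: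
  assumes fin: "finite V" and EV: "E \<subseteq> V \<times> V" and ps: "ps \<in> set_pmf (picks_pmf V E T)"
    and colored: "\<forall>v\<in>V. reaches_colored V E S0 v \<longrightarrow> rp_run V E S0 ps T v \<noteq> Uncolored"
  shows "stable V E (rp_run V E S0 ps T)"
  unfolding stable_def
proof (intro ballI impI)
  fix v u assume v: "v \<in> V" and "rp_run V E S0 ps T v = Uncolored" and u: "u \<in> out_nbrs E v"
  then have "\<not> reaches_colored V E S0 u"
    using colored reaches_colored_backward[of V E S0 u v] by (auto simp: out_nbrs_def)
  moreover have "u \<in> V" using u EV by (auto simp: out_nbrs_def)
  ultimately show "rp_run V E S0 ps T u = Uncolored"
    using colored_imp_reaches_colored[OF fin EV ps order.refl] by blast
qed

(* A pessimistic copy of the process along the path p: the front moves from j to j - 1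
   only when p_(j-1) picks p_j, ignoring every other way p_(j-1) may get coloured. *)
fun path_front :: "(nat \<Rightarrow> 'a) \<Rightarrow> nat \<Rightarrow> (nat \<times> 'a \<Rightarrow> 'a) \<Rightarrow> nat \<Rightarrow> nat" where
  "path_front p k ps 0 = k"
| "path_front p k ps (Suc t) = (let j = path_front p k ps t in
     if 0 < j \<and> ps (Suc t, p (j - 1)) = p j then j - 1 else j)"

lemma path_front_le: "path_front p k ps t \<le> k"
  by (induction t) (auto simp: Let_def)

lemma path_front_cong:
  assumes "\<forall>t'\<in>{1..t}. \<forall>i<k. ps (t', p i) = ps' (t', p i)"
  shows "path_front p k ps t = path_front p k ps' t"
  using assms
proof (induction t)
  case (Suc t)
  define j where "j = path_front p k ps t"
  have "j = path_front p k ps' t" using Suc by (simp add: j_def)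
  moreover have "0 < j \<Longrightarrow> ps (Suc t, p (j - 1)) = ps' (Suc t, p (j - 1))"
    using Suc.prems path_front_le[of p k ps t] unfolding j_def
    by (metis atLeastAtMost_iff diff_less le_add1 less_le_trans plus_1_eq_Suc order_refl zero_less_one)
  ultimately show ?case unfolding path_front.simps Let_def j_def[symmetric] by metis
qed simp

lemma colored_beyond_path_front:
  assumes path: "\<forall>i<k. (p i, p (Suc i)) \<in> E" and EV: "E \<subseteq> V \<times> V"
    and colored: "S0 (p k) \<noteq> Uncolored"
  shows "path_front p k ps t \<le> i \<Longrightarrow> i \<le> k \<Longrightarrow> rp_run V E S0 ps t (p i) \<noteq> Uncolored"
proof (induction t arbitrary: i)
  case 0
  then show ?case using colored by simp
next
  case (Suc t)
  define j where "j = path_front p k ps t"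
  have IH: "j \<le> i' \<Longrightarrow> i' \<le> k \<Longrightarrow> rp_run V E S0 ps t (p i') \<noteq> Uncolored" for i'
    using Suc.IH unfolding j_def .
  show ?case
  proof (cases "j \<le> i")
    case True
    show ?thesis by (rule rp_run_colored_Suc[OF IH[OF True Suc.prems(2)]])
  next
    case False
    have front: "path_front p k ps (Suc t) =
        (if 0 < j \<and> ps (Suc t, p (j - 1)) = p j then j - 1 else j)"
      by (simp add: j_def Let_def)
    then have step: "0 < j" "ps (Suc t, p (j - 1)) = p j"
      using Suc.prems(1) False by (auto split: if_splits)
    then have i: "i = j - 1" using Suc.prems(1) False front by simp
    have "j \<le> k" by (simp add: j_def path_front_le)
    then have "i < k" "Suc i = j" using i step by simp_all
    then have edge: "(p i, p j) \<in> E" using path by metis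
    have "rp_run V E S0 ps t (p j) \<noteq> Uncolored" using IH \<open>j \<le> k\<close> by simp
    moreover have "p i \<in> V" "out_nbrs E (p i) \<noteq> {}" using edge EV by (auto simp: out_nbrs_def)
    ultimately show ?thesis unfolding rp_run_Suc_eq using step i by auto
  qed
qed

lemma unstable_imp_path_front_pos:
  assumes fin: "finite V" and EV: "E \<subseteq> V \<times> V" and ps: "ps \<in> set_pmf (picks_pmf V E T)"
    and paths: "\<forall>v\<in>V. reaches_colored V E S0 v \<longrightarrow> P v 0 = v \<and> S0 (P v (K v)) \<noteq> Uncolored
                   \<and> (\<forall>i<K v. (P v i, P v (Suc i)) \<in> E)"
    and unstable: "\<not> stable V E (rp_run V E S0 ps T)"
  shows "\<exists>v\<in>V. reaches_colored V E S0 v \<and> 0 < path_front (P v) (K v) ps T"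
proof (rule ccontr)
  assume "\<not> ?thesis"
  then have "rp_run V E S0 ps T v \<noteq> Uncolored" if "v \<in> V" "reaches_colored V E S0 v" for v
    using colored_beyond_path_front[OF _ EV, of "K v" "P v" S0 ps T 0] paths that by auto
  then show False using stable_if_reaching_colored[OF fin EV ps] unstable by blast
qed

lemma path_relpow:
  assumes path: "\<forall>i<k. (p i, p (Suc i)) \<in> E"
  shows "a \<le> b \<Longrightarrow> b \<le> k \<Longrightarrow> (p a, p b) \<in> E ^^ (b - a)"
proof (induction b)
  case (Suc b)
  show ?case
  proof (cases "a = Suc b")
    case False
    then have "(p a, p b) \<in> E ^^ (b - a)" "(p b, p (Suc b)) \<in> E" using Suc path by auto
    then have "(p a, p (Suc b)) \<in> E ^^ Suc (b - a)" by (rule relpow_Suc_I)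
    moreover have "Suc (b - a) = Suc b - a" using False Suc.prems by auto
    ultimately show ?thesis by simp
  qed simp
qed simp

definition shortest_path :: "('a \<times> 'a) set \<Rightarrow> 'a \<Rightarrow> 'a \<Rightarrow> nat \<Rightarrow> (nat \<Rightarrow> 'a) \<Rightarrow> bool" where
  "shortest_path E v w k p \<longleftrightarrow> p 0 = v \<and> p k = w \<and> (\<forall>i<k. (p i, p (Suc i)) \<in> E)
     \<and> (\<forall>m. (v, w) \<in> E ^^ m \<longrightarrow> k \<le> m)"

lemma shortest_path_exists:
  assumes "(v, w) \<in> E\<^sup>*"
  obtains k p where "shortest_path E v w k p"
proof -
  define k where "k = (LEAST m. (v, w) \<in> E ^^ m)"
  obtain m where "(v, w) \<in> E ^^ m" using assms by (auto simp: rtrancl_power)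
  then have "(v, w) \<in> E ^^ k" unfolding k_def by (rule LeastI)
  then obtain p where "p 0 = v" "p k = w" "\<forall>i<k. (p i, p (Suc i)) \<in> E"
    unfolding relpow_fun_conv by blast
  moreover have "\<forall>m. (v, w) \<in> E ^^ m \<longrightarrow> k \<le> m" unfolding k_def by (auto intro: Least_le)
  ultimately show ?thesis using that unfolding shortest_path_def by blast
qed

lemma shortest_path_in_nodes:
  assumes "shortest_path E v w k p" "E \<subseteq> V \<times> V" "v \<in> V" "i \<le> k"
  shows "p i \<in> V"
proof (cases i)
  case (Suc j)
  then have "(p j, p i) \<in> E" using assms by (simp add: shortest_path_def)
  then show ?thesis using assms(2) by auto
qed (use assms in \<open>simp add: shortest_path_def\<close>)

lemma shortest_path_is_dist:
  assumes "shortest_path E v w k p"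
  shows "is_dist E v w k"
proof -
  have "(v, w) \<in> E ^^ k" using assms path_relpow[of k p E 0 k] by (simp add: shortest_path_def)
  then show ?thesis using assms unfolding shortest_path_def is_dist_def by (meson leD)
qed

lemma is_dist_unique: "is_dist E v u k \<Longrightarrow> is_dist E v u k' \<Longrightarrow> k = k'"
  unfolding is_dist_def using linorder_neqE_nat by blast

lemma shortest_path_length_le_diam:
  assumes fin: "finite V" and sp: "shortest_path E v w k p" and "v \<in> V" "w \<in> V"
  shows "k \<le> diam V E"
proof -
  have "{k. \<exists>v\<in>V. \<exists>u\<in>V. is_dist E v u k} \<subseteq> (\<Union>v\<in>V. \<Union>u\<in>V. {THE k. is_dist E v u k})"
  (is "?dists \<subseteq> ?U")
  proof
    fix k assume "k \<in> {k. \<exists>v\<in>V. \<exists>u\<in>V. is_dist E v u k}"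
    then obtain v u where "v \<in> V" "u \<in> V" "is_dist E v u k" by blast
    moreover from this have "k = (THE k. is_dist E v u k)"
      using is_dist_unique by (intro the_equality[symmetric]) auto
    ultimately show "k \<in> (\<Union>v\<in>V. \<Union>u\<in>V. {THE k. is_dist E v u k})" by blast
  qed
  moreover have "finite ?U" using fin by simp
  ultimately have "finite ?dists" by (rule finite_subset)
  then show ?thesis
    unfolding diam_def using shortest_path_is_dist[OF sp] assms by (intro Max_ge) auto
qed

lemma shortest_path_no_shortcut:
  assumes sp: "shortest_path E v w k p" and "a \<le> i" "i \<le> k" and "(p a, p i) \<in> E ^^ m"
  shows "i \<le> a + m"
proof -
  have path: "\<forall>i<k. (p i, p (Suc i)) \<in> E" and "p 0 = v" "p k = w"
    using sp by (auto simp: shortest_path_def)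
  then have "(v, p a) \<in> E ^^ a" "(p i, w) \<in> E ^^ (k - i)"
    using path_relpow[OF path, of 0 a] path_relpow[OF path, of i k] assms by auto
  then have "(v, w) \<in> E ^^ (a + m + (k - i))"
    using assms(4) unfolding relpow_add by blast
  then have "k \<le> a + m + (k - i)" using sp by (auto simp: shortest_path_def)
  then show ?thesis using assms by simp
qed

lemma shortest_path_common_nbrs:
  assumes sp: "shortest_path E v w k p" and und: "undirected E"
  shows "card {i. i < k \<and> (p i, u) \<in> E} \<le> 3"
proof (cases "{i. i < k \<and> (p i, u) \<in> E} = {}")
  case False
  define a where "a = Min {i. i < k \<and> (p i, u) \<in> E}"
  have a: "a < k" "(p a, u) \<in> E" using False Min_in[of "{i. i < k \<and> (p i, u) \<in> E}"]
    by (auto simp: a_def)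
  have "{i. i < k \<and> (p i, u) \<in> E} \<subseteq> {a..a + 2}"
  proof
    fix i assume i: "i \<in> {i. i < k \<and> (p i, u) \<in> E}"
    then have "a \<le> i" by (simp add: a_def)
    moreover have "(p a, p i) \<in> E ^^ 2"
      using a i und by (auto simp: numeral_2_eq_2 undirected_def intro: relpow_Suc_I2)
    moreover have "i \<le> k" using i by simp
    ultimately show "i \<in> {a..a + 2}"
      using shortest_path_no_shortcut[OF sp, of a i 2] by simp
  qed
  then show ?thesis using card_mono[of "{a..a + 2}"] by fastforce
qed (simp only: card.empty)

lemma undirected_shortest_path_sum_out_deg:
  assumes fin: "finite V" and EV: "E \<subseteq> V \<times> V" and und: "undirected E"
    and sp: "shortest_path E v w k p"
  shows "(\<Sum>i<k. real (out_deg E (p i))) \<le> 3 * real (card V)"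
proof -
  have "(\<Sum>i<k. real (out_deg E (p i))) = (\<Sum>i<k. \<Sum>u\<in>V. of_bool ((p i, u) \<in> E))"
    using fin EV by (intro sum.cong) (auto simp: out_deg_def out_nbrs_def Int_def intro!: arg_cong[where f = card])
  also have "\<dots> = (\<Sum>u\<in>V. real (card {i. i < k \<and> (p i, u) \<in> E}))"
    by (subst sum.swap) (simp add: Int_def)
  also have "\<dots> \<le> (\<Sum>u\<in>V. 3)"
    using shortest_path_common_nbrs[OF sp und] by (intro sum_mono) simp
  finally show ?thesis by simp
qed

definition active_nodes :: "'a set \<Rightarrow> ('a \<times> 'a) set \<Rightarrow> 'a set" where
  "active_nodes V E = {v\<in>V. out_nbrs E v \<noteq> {}}"

definition round_pmf :: "'a set \<Rightarrow> ('a \<times> 'a) set \<Rightarrow> nat \<Rightarrow> (nat \<times> 'a \<Rightarrow> 'a) pmf" where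
  "round_pmf V E t =
     Pi_pmf ({t} \<times> active_nodes V E) undefined (\<lambda>(t, v). pmf_of_set (out_nbrs E v))"

lemma picks_pmf_Suc:
  assumes "finite V"
  shows "picks_pmf V E (Suc T) =
     map_pmf (\<lambda>(f, g) x. if x \<in> {1..T} \<times> active_nodes V E then f x else g x)
       (pair_pmf (picks_pmf V E T) (round_pmf V E (Suc T)))"
proof -
  have "{1..Suc T} \<times> active_nodes V E = {1..T} \<times> active_nodes V E \<union> {Suc T} \<times> active_nodes V E"
    by auto
  then show ?thesis
    unfolding picks_pmf_def round_pmf_def active_nodes_def[symmetric]
    by (simp only:) (rule Pi_pmf_union, auto simp: assms active_nodes_def)
qed

lemma round_pmf_component:
  assumes "finite V" and "v \<in> active_nodes V E"
  shows "map_pmf (\<lambda>g. g (t, v)) (round_pmf V E t) = pmf_of_set (out_nbrs E v)"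
  unfolding round_pmf_def using assms
  by (subst Pi_pmf_component) (auto simp: active_nodes_def)

(* potential w 0 = 0 rather than 1: once all w i \<ge> 1, the potential then dominates the
   indicator of 0 < j, i.e. of v still being uncoloured. *)
definition potential :: "(nat \<Rightarrow> real) \<Rightarrow> nat \<Rightarrow> real" where
  "potential w j = (if j = 0 then 0 else (\<Prod>i<j. w i))"

lemma potential_nonneg: "(\<And>i. i < j \<Longrightarrow> 0 \<le> w i) \<Longrightarrow> 0 \<le> potential w j"
  unfolding potential_def by (auto intro!: prod_nonneg)

lemma sum_if_eq:
  assumes "finite N" "a \<in> N"
  shows "(\<Sum>y\<in>N. f (if y = a then x else x')) = f x + (real (card N) - 1) * (f x' :: real)"
proof -
  have "(\<Sum>y\<in>N. f (if y = a then x else x')) = f x + (\<Sum>y\<in>N - {a}. f x')"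
    using assms by (simp add: sum.remove)
  moreover have "card N \<ge> 1" using assms by (metis One_nat_def Suc_leI card_gt_0_iff empty_iff)
  ultimately show ?thesis using assms by (simp add: card_Diff_singleton of_nat_diff)
qed

lemma potential_step_ineq:
  fixes d Q P \<alpha> :: real
  assumes "d \<ge> 1" "0 \<le> P" "P \<le> Q" "\<alpha> * d < 1"
  shows "(P + (d - 1) * (Q / (1 - \<alpha> * d))) / d \<le> (1 - \<alpha>) * (Q / (1 - \<alpha> * d))"
proof -
  have "(P + (d - 1) * (Q / (1 - \<alpha> * d))) / d \<le> (Q + (d - 1) * (Q / (1 - \<alpha> * d))) / d"
    using assms by (simp add: divide_right_mono)
  also have "\<dots> = (1 - \<alpha>) * (Q / (1 - \<alpha> * d))"
    using assms by (simp add: field_simps)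
  finally show ?thesis .
qed

lemma expected_potential_pick:
  assumes finN: "finite N" and aN: "a \<in> N" and "0 < j" and w_nonneg: "\<forall>i<j. 0 \<le> w i"
    and ad: "\<alpha> * real (card N) < 1" and wj: "w (j - 1) = 1 / (1 - \<alpha> * real (card N))"
  shows "(\<integral>\<^sup>+y. ennreal (potential w (if y = a then j - 1 else j)) \<partial>pmf_of_set N)
           \<le> ennreal ((1 - \<alpha>) * potential w j)"
proof -
  define d where "d = real (card N)"
  define Q where "Q = (\<Prod>i<j - 1. w i)"
  have "card N > 0" using finN aN card_gt_0_iff by blast
  then have d1: "d \<ge> 1" by (simp add: d_def)
  have Q0: "0 \<le> Q" unfolding Q_def using w_nonneg by (intro prod_nonneg) auto
  have pot_j: "potential w j = Q / (1 - \<alpha> * d)"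
  proof -
    have "potential w j = (\<Prod>i<Suc (j - 1). w i)" using \<open>0 < j\<close> by (simp add: potential_def)
    also have "\<dots> = Q * w (j - 1)" by (simp add: Q_def)
    finally show ?thesis using wj by (simp add: d_def)
  qed
  have pot_j1: "0 \<le> potential w (j - 1)" "potential w (j - 1) \<le> Q"
    unfolding potential_def Q_def using Q_def Q0 by auto
  have pot_j0: "0 \<le> potential w j" using pot_j Q0 ad by (simp add: d_def)
  have "(\<integral>\<^sup>+y. ennreal (potential w (if y = a then j - 1 else j)) \<partial>pmf_of_set N)
      = (\<Sum>y\<in>N. ennreal (potential w (if y = a then j - 1 else j))) / ennreal d"
    using aN finN by (subst nn_integral_pmf_of_set) (auto simp: d_def ennreal_of_nat_eq_real_of_nat)
  also have "(\<Sum>y\<in>N. ennreal (potential w (if y = a then j - 1 else j)))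
      = ennreal (potential w (j - 1) + (d - 1) * potential w j)"
    unfolding d_def using pot_j1 pot_j0 finN aN
    by (subst sum_ennreal) (auto intro!: potential_nonneg simp: sum_if_eq)
  also have "\<dots> / d = ennreal ((potential w (j - 1) + (d - 1) * potential w j) / d)"
    using d1 pot_j1 pot_j0 by (subst divide_ennreal) auto
  also have "\<dots> \<le> ennreal ((1 - \<alpha>) * potential w j)"
    using potential_step_ineq[OF d1 pot_j1] ad pot_j by (intro ennreal_leI) (simp add: d_def)
  finally show ?thesis .
qed

lemma expected_potential_round:
  fixes f :: "nat \<times> 'a \<Rightarrow> 'a" and T :: nat
  assumes fin: "finite V" and EV: "E \<subseteq> V \<times> V" and path: "\<forall>i<k. (p i, p (Suc i)) \<in> E"
    and deg: "\<forall>i<k. \<alpha> * real (out_deg E (p i)) < 1"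
    and w: "\<forall>i<k. w i = 1 / (1 - \<alpha> * real (out_deg E (p i)))"
  defines "extend \<equiv> \<lambda>g x. if x \<in> {1..T} \<times> active_nodes V E then f x else g x"
  shows "(\<integral>\<^sup>+g. ennreal (potential w (path_front p k (extend g) (Suc T))) \<partial>round_pmf V E (Suc T))
           \<le> ennreal ((1 - \<alpha>) * potential w (path_front p k f T))"
proof -
  define j where "j = path_front p k f T"
  have jk: "j \<le> k" unfolding j_def by (rule path_front_le)
  have active: "p i \<in> active_nodes V E" if "i < k" for i
    using path EV that unfolding active_nodes_def out_nbrs_def by blast
  have "path_front p k (extend g) T = j" for g
    unfolding j_def extend_def by (rule path_front_cong) (auto simp: active)
  then have front: "path_front p k (extend g) (Suc T) =
      (if 0 < j \<and> g (Suc T, p (j - 1)) = p j then j - 1 else j)" for g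
    by (simp add: Let_def extend_def)
  show ?thesis
  proof (cases "j = 0")
    case True
    then show ?thesis by (simp add: front potential_def j_def[symmetric] del: path_front.simps)
  next
    case False
    define u where "u = p (j - 1)"
    have j1: "j - 1 < k" "Suc (j - 1) = j" using False jk by auto
    then have "p j \<in> out_nbrs E u" using path unfolding u_def out_nbrs_def by (metis mem_Collect_eq)
    have "(\<integral>\<^sup>+g. ennreal (potential w (path_front p k (extend g) (Suc T))) \<partial>round_pmf V E (Suc T))
        = (\<integral>\<^sup>+y. ennreal (potential w (if y = p j then j - 1 else j))
             \<partial>map_pmf (\<lambda>g. g (Suc T, u)) (round_pmf V E (Suc T)))"
      using False by (simp add: front u_def del: path_front.simps)
    also have "\<dots> = (\<integral>\<^sup>+y. ennreal (potential w (if y = p j then j - 1 else j)) \<partial>pmf_of_set (out_nbrs E u))"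
      using j1 active unfolding u_def by (subst round_pmf_component[OF fin]) auto
    also have "\<dots> \<le> ennreal ((1 - \<alpha>) * potential w j)"
      using w deg j1 jk False \<open>p j \<in> out_nbrs E u\<close>
      by (intro expected_potential_pick finite_out_nbrs[OF fin EV])
        (auto simp: u_def out_deg_def less_imp_le)
    finally show ?thesis by (simp add: j_def)
  qed
qed

lemma expected_potential_decay:
  assumes fin: "finite V" and EV: "E \<subseteq> V \<times> V" and path: "\<forall>i<k. (p i, p (Suc i)) \<in> E"
    and \<alpha>: "\<alpha> \<le> 1" and deg: "\<forall>i<k. \<alpha> * real (out_deg E (p i)) < 1"
    and w: "\<forall>i<k. w i = 1 / (1 - \<alpha> * real (out_deg E (p i)))"
  shows "(\<integral>\<^sup>+ps. ennreal (potential w (path_front p k ps T)) \<partial>picks_pmf V E T)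
           \<le> ennreal ((1 - \<alpha>) ^ T * potential w k)"
proof (induction T)
  case 0
  have "picks_pmf V E 0 = return_pmf (\<lambda>_. undefined)" by (simp add: picks_pmf_def)
  then show ?case by simp
next
  case (Suc T)
  have pot_nonneg: "0 \<le> potential w j" if "j \<le> k" for j
    using w deg that by (intro potential_nonneg) (simp add: less_imp_le)
  let ?pot = "\<lambda>T ps. ennreal (potential w (path_front p k ps T))"
  let ?extend = "\<lambda>f g x. if x \<in> {1..T} \<times> active_nodes V E then f x else g x"
  have "(\<integral>\<^sup>+ps. ?pot (Suc T) ps \<partial>picks_pmf V E (Suc T))
      = (\<integral>\<^sup>+f. \<integral>\<^sup>+g. ?pot (Suc T) (?extend f g) \<partial>round_pmf V E (Suc T) \<partial>picks_pmf V E T)"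
    by (simp add: picks_pmf_Suc[OF fin] nn_integral_pair_pmf' case_prod_unfold cong: if_cong del: path_front.simps)
  also have "\<dots> \<le> (\<integral>\<^sup>+f. ennreal ((1 - \<alpha>) * potential w (path_front p k f T)) \<partial>picks_pmf V E T)"
    by (intro nn_integral_mono expected_potential_round[OF fin EV path deg w])
  also have "\<dots> = (\<integral>\<^sup>+f. ennreal (1 - \<alpha>) * ?pot T f \<partial>picks_pmf V E T)"
    using \<alpha> by (intro nn_integral_cong ennreal_mult) (auto intro: pot_nonneg path_front_le)
  also have "\<dots> = ennreal (1 - \<alpha>) * (\<integral>\<^sup>+f. ?pot T f \<partial>picks_pmf V E T)"
    by (rule nn_integral_cmult) simp
  also have "\<dots> \<le> ennreal (1 - \<alpha>) * ennreal ((1 - \<alpha>) ^ T * potential w k)"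
    by (intro mult_left_mono Suc.IH) simp
  also have "\<dots> = ennreal ((1 - \<alpha>) ^ Suc T * potential w k)"
    using \<alpha> pot_nonneg[of k] by (simp add: ennreal_mult[symmetric] mult.assoc)
  finally show ?case .
qed

lemma prob_path_front_pos_le:
  assumes fin: "finite V" and EV: "E \<subseteq> V \<times> V" and path: "\<forall>i<k. (p i, p (Suc i)) \<in> E"
    and \<alpha>: "0 \<le> \<alpha>" "\<alpha> \<le> 1" and deg: "\<forall>i<k. \<alpha> * real (out_deg E (p i)) < 1"
  shows "measure_pmf.prob (picks_pmf V E T) {ps. 0 < path_front p k ps T}
           \<le> (1 - \<alpha>) ^ T * (\<Prod>i<k. 1 / (1 - \<alpha> * real (out_deg E (p i))))"
proof -
  define w where "w i = 1 / (1 - \<alpha> * real (out_deg E (p i)))" for i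
  have w1: "1 \<le> w i" if "i < k" for i
    using deg \<alpha> that by (simp add: w_def field_simps)
  have "indicator {ps. 0 < path_front p k ps T} ps \<le> ennreal (potential w (path_front p k ps T))"
    for ps
    using w1 path_front_le[of p k ps T]
    by (auto simp: potential_def intro!: prod_ge_1)
  then have "emeasure (picks_pmf V E T) {ps. 0 < path_front p k ps T}
      \<le> (\<integral>\<^sup>+ps. ennreal (potential w (path_front p k ps T)) \<partial>picks_pmf V E T)"
    by (simp add: nn_integral_mono flip: nn_integral_indicator)
  also have "\<dots> \<le> ennreal ((1 - \<alpha>) ^ T * potential w k)"
    by (rule expected_potential_decay[OF fin EV path \<alpha>(2) deg]) (simp add: w_def)
  also have "\<dots> \<le> ennreal ((1 - \<alpha>) ^ T * (\<Prod>i<k. w i))"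
    using w1 \<alpha> by (intro ennreal_leI mult_left_mono) (auto simp: potential_def)
  finally have "ennreal (measure_pmf.prob (picks_pmf V E T) {ps. 0 < path_front p k ps T})
      \<le> ennreal ((1 - \<alpha>) ^ T * (\<Prod>i<k. w i))"
    by (simp add: measure_pmf.emeasure_eq_measure)
  moreover have "0 \<le> (1 - \<alpha>) ^ T * (\<Prod>i<k. w i)"
    using \<alpha> w1 by (intro mult_nonneg_nonneg prod_nonneg) (auto intro: order_trans[OF zero_le_one])
  ultimately show ?thesis by (simp add: ennreal_le_iff w_def)
qed

lemma one_minus_power_le_exp:
  fixes \<alpha> :: real
  assumes "0 \<le> \<alpha>" "\<alpha> \<le> 1"
  shows "(1 - \<alpha>) ^ T \<le> exp (- \<alpha> * real T)"
proof -
  have "(1 - \<alpha>) ^ T \<le> exp (- \<alpha>) ^ T"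
    using assms exp_ge_add_one_self[of "- \<alpha>"] by (intro power_mono) auto
  then show ?thesis by (simp add: exp_of_nat_mult[symmetric] mult.commute)
qed

lemma one_div_one_minus_le_exp:
  fixes y :: real
  assumes "0 \<le> y" "y \<le> 1/2"
  shows "1 / (1 - y) \<le> exp (2 * y)"
proof -
  have "1 \<le> (1 + 2 * y) * (1 - y)"
    using assms mult_nonneg_nonneg[of y "1 - 2 * y"] by (simp add: algebra_simps)
  then have "1 / (1 - y) \<le> 1 + 2 * y" using assms by (simp add: divide_le_eq)
  also have "\<dots> \<le> exp (2 * y)" by (rule exp_ge_add_one_self)
  finally show ?thesis .
qed

lemma prob_path_front_pos_le_exp:
  assumes fin: "finite V" and EV: "E \<subseteq> V \<times> V" and path: "\<forall>i<k. (p i, p (Suc i)) \<in> E"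
    and \<alpha>: "0 \<le> \<alpha>" and deg: "\<forall>i<k. \<alpha> * real (out_deg E (p i)) \<le> 1/2"
  shows "measure_pmf.prob (picks_pmf V E T) {ps. 0 < path_front p k ps T}
           \<le> exp (2 * \<alpha> * (\<Sum>i<k. real (out_deg E (p i))) - \<alpha> * real T)"
proof (cases "k = 0")
  case True
  then show ?thesis using path_front_le[of p 0] by simp
next
  case False
  then have "out_deg E (p 0) \<ge> 1" using path by (intro out_deg_ge_1[OF fin EV]) auto
  then have "\<alpha> * 1 \<le> \<alpha> * real (out_deg E (p 0))" using \<alpha> by (intro mult_left_mono) auto
  then have "\<alpha> \<le> 1/2" using deg False by fastforce
  have "measure_pmf.prob (picks_pmf V E T) {ps. 0 < path_front p k ps T}
      \<le> (1 - \<alpha>) ^ T * (\<Prod>i<k. 1 / (1 - \<alpha> * real (out_deg E (p i))))"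
    using \<alpha> \<open>\<alpha> \<le> 1/2\<close> deg by (intro prob_path_front_pos_le[OF fin EV path]) auto
  also have "\<dots> \<le> exp (- \<alpha> * real T) * (\<Prod>i<k. exp (2 * (\<alpha> * real (out_deg E (p i)))))"
  proof (intro mult_mono one_minus_power_le_exp prod_mono conjI)
    fix i assume "i \<in> {..<k}"
    then have "0 \<le> \<alpha> * real (out_deg E (p i))" "\<alpha> * real (out_deg E (p i)) \<le> 1/2"
      using \<alpha> deg by auto
    then show "0 \<le> 1 / (1 - \<alpha> * real (out_deg E (p i)))"
      and "1 / (1 - \<alpha> * real (out_deg E (p i))) \<le> exp (2 * (\<alpha> * real (out_deg E (p i))))"
      by (simp_all add: one_div_one_minus_le_exp)
  qed (use \<alpha> \<open>\<alpha> \<le> 1/2\<close> deg in \<open>auto intro!: prod_nonneg\<close>)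
  also have "\<dots> = exp (2 * \<alpha> * (\<Sum>i<k. real (out_deg E (p i))) - \<alpha> * real T)"
    by (simp add: exp_sum[symmetric] exp_add[symmetric] sum_distrib_left mult.assoc)
  finally show ?thesis .
qed

lemma prob_unstable_le:
  assumes fin: "finite V" and EV: "E \<subseteq> V \<times> V" and "0 \<le> B"
    and bound: "\<And>v. v \<in> V \<Longrightarrow> reaches_colored V E S0 v \<Longrightarrow>
      \<exists>k p. p 0 = v \<and> S0 (p k) \<noteq> Uncolored \<and> (\<forall>i<k. (p i, p (Suc i)) \<in> E)
        \<and> measure_pmf.prob (picks_pmf V E T) {ps. 0 < path_front p k ps T} \<le> B"
  shows "measure_pmf.prob (picks_pmf V E T) {ps. \<not> stable V E (rp_run V E S0 ps T)}
           \<le> real (card V) * B"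
proof -
  define R where "R = {v\<in>V. reaches_colored V E S0 v}"
  obtain K P where KP: "\<forall>v\<in>R. P v 0 = v \<and> S0 (P v (K v)) \<noteq> Uncolored
      \<and> (\<forall>i<K v. (P v i, P v (Suc i)) \<in> E)
      \<and> measure_pmf.prob (picks_pmf V E T) {ps. 0 < path_front (P v) (K v) ps T} \<le> B"
    using bchoice[of R "\<lambda>v (k, p). p 0 = v \<and> S0 (p k) \<noteq> Uncolored \<and> (\<forall>i<k. (p i, p (Suc i)) \<in> E)
        \<and> measure_pmf.prob (picks_pmf V E T) {ps. 0 < path_front p k ps T} \<le> B"]
    by (auto simp: R_def bound split_beta')
  let ?M = "measure_pmf (picks_pmf V E T)"
  let ?A = "\<lambda>v. {ps. 0 < path_front (P v) (K v) ps T}"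
  have "{ps. \<not> stable V E (rp_run V E S0 ps T)} \<inter> set_pmf (picks_pmf V E T) \<subseteq> (\<Union>v\<in>R. ?A v)"
  proof
    fix ps assume "ps \<in> {ps. \<not> stable V E (rp_run V E S0 ps T)} \<inter> set_pmf (picks_pmf V E T)"
    then have "\<exists>v\<in>V. reaches_colored V E S0 v \<and> 0 < path_front (P v) (K v) ps T"
      using KP by (intro unstable_imp_path_front_pos[OF fin EV]) (auto simp: R_def)
    then show "ps \<in> (\<Union>v\<in>R. ?A v)" by (auto simp: R_def)
  qed
  then have "measure ?M {ps. \<not> stable V E (rp_run V E S0 ps T)} \<le> measure ?M (\<Union>v\<in>R. ?A v)"
    by (subst measure_Int_set_pmf[symmetric]) (auto intro: measure_pmf.finite_measure_mono)
  also have "\<dots> \<le> (\<Sum>v\<in>R. measure ?M (?A v))"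
    using fin by (intro measure_pmf.finite_measure_subadditive_finite) (auto simp: R_def)
  also have "\<dots> \<le> real (card R) * B"
    using KP sum_mono[of R "\<lambda>v. measure ?M (?A v)" "\<lambda>_. B"] by simp
  also have "\<dots> \<le> real (card V) * B"
    using fin \<open>0 \<le> B\<close> by (intro mult_right_mono) (auto simp: R_def intro: card_mono)
  finally show ?thesis .
qed

lemma conv_prob_ge:
  assumes "0 \<le> x"
  shows "1 - measure_pmf.prob (picks_pmf V E (nat \<lfloor>x\<rfloor>))
             {ps. \<not> stable V E (rp_run V E S0 ps (nat \<lfloor>x\<rfloor>))} \<le> conv_prob V E S0 x"
proof -
  let ?M = "picks_pmf V E (nat \<lfloor>x\<rfloor>)"
  let ?stable = "{ps. stable V E (rp_run V E S0 ps (nat \<lfloor>x\<rfloor>))}"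
  have "1 - measure_pmf.prob ?M (- ?stable) = measure_pmf.prob ?M ?stable"
    using measure_pmf.prob_compl[of ?stable ?M] by (simp add: Compl_eq_Diff_UNIV)
  also have "\<dots> \<le> conv_prob V E S0 x"
    unfolding conv_prob_def using assms
    by (intro measure_pmf.finite_measure_mono) (auto intro!: exI[of _ "nat \<lfloor>x\<rfloor>"])
  finally show ?thesis by (simp add: Collect_neg_eq)
qed

lemma ln_le_log2:
  assumes "1 \<le> (x :: real)"
  shows "ln x \<le> log 2 x"
proof -
  have "ln x * ln 2 \<le> ln x" using assms ln_2_less_1 by (simp add: mult_left_le)
  then show ?thesis by (simp add: log_def le_divide_eq)
qed

lemma directed_path_front_bound:
  assumes fin: "finite V" and EV: "E \<subseteq> V \<times> V" and n: "2 \<le> card V"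
    and sp: "shortest_path E v w k p" and "v \<in> V" "w \<in> V" and "0 < k"
  defines "T \<equiv> nat \<lfloor>4 * real (diam V E) * real (max_out_deg V E) * log 2 (real (card V))\<rfloor>"
  shows "measure_pmf.prob (picks_pmf V E T) {ps. 0 < path_front p k ps T}
           \<le> exp (2 - 2 * ln (real (card V)))"
proof -
  define \<Delta> where "\<Delta> = real (max_out_deg V E)"
  define D where "D = real (diam V E)"
  define L where "L = log 2 (real (card V))"
  define \<alpha> where "\<alpha> = 1 / (2 * \<Delta>)"
  have path: "\<forall>i<k. (p i, p (Suc i)) \<in> E" using sp by (simp add: shortest_path_def)
  have deg_le: "real (out_deg E (p i)) \<le> \<Delta>" if "i < k" for i
    using out_deg_le_max_out_deg[OF fin] shortest_path_in_nodes[OF sp EV \<open>v \<in> V\<close>] that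
    by (simp add: \<Delta>_def)
  have "1 \<le> out_deg E (p 0)" using path \<open>0 < k\<close> by (intro out_deg_ge_1[OF fin EV]) auto
  then have \<Delta>1: "1 \<le> \<Delta>" using deg_le[OF \<open>0 < k\<close>] by linarith
  have D1: "1 \<le> D" and kD: "real k \<le> D"
    using shortest_path_length_le_diam[OF fin sp \<open>v \<in> V\<close> \<open>w \<in> V\<close>] \<open>0 < k\<close> by (auto simp: D_def)
  have L1: "1 \<le> L" and lnL: "ln (real (card V)) \<le> L"
    using n ln_le_log2[of "real (card V)"] by (auto simp: L_def)
  have \<alpha>0: "0 \<le> \<alpha>" using \<Delta>1 by (simp add: \<alpha>_def)
  have "\<alpha> * real (out_deg E (p i)) \<le> 1/2" if "i < k" for i
    using deg_le[OF that] \<Delta>1 by (simp add: \<alpha>_def field_simps)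
  then have "measure_pmf.prob (picks_pmf V E T) {ps. 0 < path_front p k ps T}
      \<le> exp (2 * \<alpha> * (\<Sum>i<k. real (out_deg E (p i))) - \<alpha> * real T)"
    by (intro prob_path_front_pos_le_exp[OF fin EV path \<alpha>0]) auto
  also have "\<dots> \<le> exp (2 - 2 * ln (real (card V)))"
  proof -
    have "(\<Sum>i<k. real (out_deg E (p i))) \<le> k * \<Delta>"
      using sum_mono[of "{..<k}" "\<lambda>i. real (out_deg E (p i))" "\<lambda>_. \<Delta>"] deg_le by simp
    also have "\<dots> \<le> D * \<Delta>" using kD \<Delta>1 by (simp add: mult_right_mono)
    finally have sum_le: "2 * \<alpha> * (\<Sum>i<k. real (out_deg E (p i))) \<le> D"
      using \<alpha>0 \<Delta>1 by (simp add: \<alpha>_def field_simps)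
    have "4 * D * \<Delta> * L - 1 \<le> real T"
      unfolding T_def D_def \<Delta>_def L_def by linarith
    then have "\<alpha> * (4 * D * \<Delta> * L - 1) \<le> \<alpha> * real T" using \<alpha>0 by (rule mult_left_mono)
    moreover have "\<alpha> * (4 * D * \<Delta> * L - 1) = 2 * D * L - \<alpha>" and "\<alpha> \<le> 1/2"
      using \<Delta>1 by (simp_all add: \<alpha>_def field_simps)
    ultimately have "2 * D * L - 1/2 \<le> \<alpha> * real T" by linarith
    moreover have "D * (2 * L - 1) \<ge> 2 * L - 1" using D1 L1 by (simp add: mult_le_cancel_right1)
    ultimately show ?thesis using sum_le lnL by (simp add: algebra_simps)
  qed
  finally show ?thesis .
qed

lemma undirected_path_front_bound:
  assumes fin: "finite V" and EV: "E \<subseteq> V \<times> V" and n: "2 \<le> card V" and und: "undirected E"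
    and sp: "shortest_path E v w k p" and "v \<in> V"
  defines "T \<equiv> nat \<lfloor>20 * real (card V) * log 2 (real (card V))\<rfloor>"
  shows "measure_pmf.prob (picks_pmf V E T) {ps. 0 < path_front p k ps T}
           \<le> exp (2 - 2 * ln (real (card V)))"
proof -
  define n where "n = real (card V)"
  define L where "L = log 2 n"
  define \<alpha> where "\<alpha> = 1 / (2 * n)"
  have path: "\<forall>i<k. (p i, p (Suc i)) \<in> E" using sp by (simp add: shortest_path_def)
  have n2: "2 \<le> n" using n by (simp add: n_def)
  have L1: "1 \<le> L" and lnL: "ln n \<le> L"
    using n2 ln_le_log2[of n] by (auto simp: L_def)
  have \<alpha>0: "0 \<le> \<alpha>" using n2 by (simp add: \<alpha>_def)
  have "\<alpha> * real (out_deg E u) \<le> 1/2" for u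
    using out_deg_le_card[OF fin EV, of u] n2 by (simp add: \<alpha>_def n_def field_simps)
  then have "measure_pmf.prob (picks_pmf V E T) {ps. 0 < path_front p k ps T}
      \<le> exp (2 * \<alpha> * (\<Sum>i<k. real (out_deg E (p i))) - \<alpha> * real T)"
    by (intro prob_path_front_pos_le_exp[OF fin EV path \<alpha>0]) auto
  also have "\<dots> \<le> exp (2 - 2 * ln n)"
  proof -
    have sum_le: "2 * \<alpha> * (\<Sum>i<k. real (out_deg E (p i))) \<le> 2 * \<alpha> * (3 * n)"
      using undirected_shortest_path_sum_out_deg[OF fin EV und sp] \<alpha>0
      by (intro mult_left_mono) (auto simp: n_def)
    have "20 * n * L - 1 \<le> real T"
      unfolding T_def n_def L_def by linarith
    then have "\<alpha> * (20 * n * L - 1) \<le> \<alpha> * real T" using \<alpha>0 by (rule mult_left_mono)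
    moreover have "\<alpha> * (20 * n * L - 1) = 10 * L - \<alpha>" and "\<alpha> \<le> 1/2" and "2 * \<alpha> * (3 * n) = 3"
      using n2 by (simp_all add: \<alpha>_def field_simps)
    ultimately show ?thesis using sum_le L1 lnL by simp
  qed
  finally show ?thesis by (simp add: n_def)
qed

lemma exp_2_div_le:
  fixes n :: real
  assumes "1 \<le> n"
  shows "exp 2 / n \<le> 18 / (n + 1)"
proof -
  have "exp (2 :: real) = exp 1 ^ 2" using exp_of_nat_mult[of 2 "1 :: real"] by simp
  also have "\<dots> \<le> 3 ^ 2" using exp_le by (intro power_mono) auto
  finally have "exp 2 * (n + 1) \<le> 9 * (n + 1)" using assms by (intro mult_right_mono) auto
  then show ?thesis using assms by (simp add: field_simps)
qed

lemma conv_prob_ge_if_shortest_paths_fast: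
  assumes fin: "finite V" and EV: "E \<subseteq> V \<times> V" and n: "2 \<le> card V" and "0 \<le> x"
    and fast: "\<And>v w k p. v \<in> V \<Longrightarrow> w \<in> V \<Longrightarrow> shortest_path E v w k p \<Longrightarrow> 0 < k \<Longrightarrow>
      measure_pmf.prob (picks_pmf V E (nat \<lfloor>x\<rfloor>)) {ps. 0 < path_front p k ps (nat \<lfloor>x\<rfloor>)}
        \<le> exp (2 - 2 * ln (real (card V)))"
  shows "1 - 18 / (real (card V) + 1) \<le> conv_prob V E S0 x"
proof -
  define T where "T = nat \<lfloor>x\<rfloor>"
  define B where "B = exp (2 - 2 * ln (real (card V)))"
  have "\<exists>k p. p 0 = v \<and> S0 (p k) \<noteq> Uncolored \<and> (\<forall>i<k. (p i, p (Suc i)) \<in> E)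
      \<and> measure_pmf.prob (picks_pmf V E T) {ps. 0 < path_front p k ps T} \<le> B"
    if v: "v \<in> V" and reaches: "reaches_colored V E S0 v" for v
  proof -
    obtain w where w: "w \<in> V" "S0 w \<noteq> Uncolored" "(v, w) \<in> E\<^sup>*"
      using reaches unfolding reaches_colored_def by blast
    then obtain k p where sp: "shortest_path E v w k p" by (blast elim: shortest_path_exists)
    have "measure_pmf.prob (picks_pmf V E T) {ps. 0 < path_front p k ps T} \<le> B"
    proof (cases "k = 0")
      case True
      then show ?thesis using path_front_le[of p 0] by (simp add: B_def)
    qed (use fast[OF v w(1) sp] in \<open>simp add: T_def B_def\<close>)
    then show ?thesis using sp w by (auto simp: shortest_path_def)
  qed
  then have "measure_pmf.prob (picks_pmf V E T) {ps. \<not> stable V E (rp_run V E S0 ps T)}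
      \<le> real (card V) * B"
    by (intro prob_unstable_le[OF fin EV]) (simp_all add: B_def)
  also have "\<dots> = exp 2 / real (card V)"
  proof -
    have "exp (2 * ln (real (card V))) = real (card V) ^ 2"
      using exp_of_nat_mult[of 2 "ln (real (card V))"] n by simp
    then show ?thesis using n by (simp add: B_def exp_diff power2_eq_square)
  qed
  also have "\<dots> \<le> 18 / (real (card V) + 1)"
    using n by (intro exp_2_div_le) simp
  finally show ?thesis using conv_prob_ge[OF \<open>0 \<le> x\<close>, of V E S0] by (simp add: T_def)
qed

lemma conv_prob_ge_small:
  assumes "card V < 2"
  shows "1 - 18 / (real (card V) + 1) \<le> conv_prob V E S0 x"
proof -
  have "1 - 18 / (real (card V) + 1) \<le> 0" using assms by (simp add: field_simps)
  also have "0 \<le> conv_prob V E S0 x" by (simp add: conv_prob_def)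
  finally show ?thesis .
qed

theorem theorem3p2:
  "\<exists>\<delta> :: nat \<Rightarrow> real. \<delta> \<longlonglongrightarrow> 0 \<and>
     (\<forall>(V :: 'a set) E (S0 :: 'a state). finite V \<longrightarrow> E \<subseteq> V \<times> V \<longrightarrow>
        conv_prob V E S0 (4 * real (diam V E) * real (max_out_deg V E) * log 2 (real (card V)))
          \<ge> 1 - \<delta> (card V)
        \<and> (undirected E \<longrightarrow>
             conv_prob V E S0 (20 * real (card V) * log 2 (real (card V))) \<ge> 1 - \<delta> (card V)))"
proof (intro exI[of _ "\<lambda>n. 18 / (real n + 1)"] conjI allI impI)
  show "(\<lambda>n. 18 / (real n + 1)) \<longlonglongrightarrow> 0"
    using LIMSEQ_Suc[OF lim_const_over_n[of 18]] by (simp add: add.commute)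
next
  fix V :: "'a set" and E and S0 :: "'a state"
  assume fin: "finite V" and EV: "E \<subseteq> V \<times> V"
  show "1 - 18 / (real (card V) + 1)
      \<le> conv_prob V E S0 (4 * real (diam V E) * real (max_out_deg V E) * log 2 (real (card V)))"
  proof (cases "card V < 2")
    case False
    then show ?thesis
      by (intro conv_prob_ge_if_shortest_paths_fast[OF fin EV])
        (auto intro: directed_path_front_bound[OF fin EV])
  qed (rule conv_prob_ge_small)
  assume und: "undirected E"
  show "1 - 18 / (real (card V) + 1)
      \<le> conv_prob V E S0 (20 * real (card V) * log 2 (real (card V)))"
  proof (cases "card V < 2")
    case False
    then show ?thesis
      by (intro conv_prob_ge_if_shortest_paths_fast[OF fin EV])
        (auto intro: undirected_path_front_bound[OF fin EV _ und])
  qed (rule conv_prob_ge_small)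
qed

end
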